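(* Suppose $X$ has well-defined scattered $\Pi_1$-products. Let $A$ be a homotopy cut-set for paths $\alpha,\beta:[0,1]\to X$ such that $\alpha|_{[a,b]}\simeq\beta|_{[a,b]}$ for all $a,b\in A\cap(0,1)$ with $a<b$. Then $\alpha\simeq\beta$.
   Context: $\simeq$ is path-homotopy. For paths $\alpha,\beta:[s,t]\to X$, a set $A\subseteq[s,t]$ is a homotopy cut-set for $\alpha,\beta$ if $A$ is closed, nowhere dense, contains $\{s,t\}$, $\alpha|_A=\beta|_A$, and $\alpha|_{[a,b]}\simeq\beta|_{[a,b]}$ for every component $(a,b)$ of $[s,t]\setminus A$. $X$ has well-defined scattered $\Pi_1$-products if any two paths $[0,1]\to X$ that admit a scattered homotopy cut-set (one in which every non-empty subset has an isolated point) are path-homotopic. *)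

theory Defs
  imports "HOL-Analysis.Analysis"
begin

definition path_homotopic_on :: "'a topology \<Rightarrow> real \<Rightarrow> real \<Rightarrow> (real \<Rightarrow> 'a) \<Rightarrow> (real \<Rightarrow> 'a) \<Rightarrow> bool" where
  "path_homotopic_on X s t \<alpha> \<beta> \<longleftrightarrow>
     homotopic_with (\<lambda>h. h s = \<alpha> s \<and> h t = \<alpha> t)
       (subtopology euclideanreal {s..t}) X \<alpha> \<beta>"

definition homotopy_cut_set :: "'a topology \<Rightarrow> real \<Rightarrow> real \<Rightarrow> (real \<Rightarrow> 'a) \<Rightarrow> (real \<Rightarrow> 'a) \<Rightarrow> real set \<Rightarrow> bool" where
  "homotopy_cut_set X s t \<alpha> \<beta> A \<longleftrightarrow>
     A \<subseteq> {s..t} \<and> closed A \<and> interior (closure A) = {} \<and> s \<in> A \<and> t \<in> A \<and>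
     (\<forall>x\<in>A. \<alpha> x = \<beta> x) \<and>
     (\<forall>a b. {a<..<b} \<in> components ({s..t} - A) \<longrightarrow> path_homotopic_on X a b \<alpha> \<beta>)"

definition scattered_set :: "real set \<Rightarrow> bool" where
  "scattered_set A \<longleftrightarrow> (\<forall>B\<subseteq>A. B \<noteq> {} \<longrightarrow> (\<exists>x\<in>B. \<not> x islimpt B))"

definition well_defined_scattered_products :: "'a topology \<Rightarrow> bool" where
  "well_defined_scattered_products X \<longleftrightarrow>
     (\<forall>\<alpha> \<beta>. pathin X \<alpha> \<and> pathin X \<beta> \<and>
        (\<exists>A. homotopy_cut_set X 0 1 \<alpha> \<beta> A \<and> scattered_set A)
        \<longrightarrow> path_homotopic_on X 0 1 \<alpha> \<beta>)"

end

theory Submission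
  imports Defs
begin

text \<open>Let \<open>m\<close> and \<open>M\<close> be the infimum and supremum of \<open>A \<inter> (0,1)\<close>, and let \<open>B \<subseteq> A\<close>
  consist of \<open>0, 1, m, M\<close> and two sequences in \<open>A \<inter> (0,1)\<close> converging to \<open>m\<close> and \<open>M\<close>.
  Then \<open>B\<close> is closed and has at most the limit points \<open>m, M\<close>, so it is scattered.
  It is again a homotopy cut-set: a gap of \<open>B\<close> with both ends in \<open>(0,1)\<close> is covered by the
  hypothesis, while a gap of \<open>B\<close> ending at \<open>0\<close> or \<open>1\<close> meets no point of \<open>A\<close>, because every
  point of \<open>A \<inter> (0,1)\<close> has points of \<open>B\<close> between it and both ends; so that gap is a gap
  of \<open>A\<close>.\<close>

lemma open_interval_in_components_iff:
  fixes A :: "real set"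
  assumes "s \<in> A" "t \<in> A"
  shows "{a<..<b} \<in> components ({s..t} - A) \<longleftrightarrow>
           a < b \<and> s \<le> a \<and> b \<le> t \<and> a \<in> A \<and> b \<in> A \<and> {a<..<b} \<inter> A = {}"
    (is "?C \<longleftrightarrow> ?R")
proof
  assume C: ?C
  have sub: "{a<..<b} \<subseteq> {s..t} - A"
    using C in_components_subset by blast
  have "a < b"
    using in_components_nonempty[OF C] by simp
  then have ab: "a < b" "s \<le> a" "b \<le> t"
    using sub greaterThanLessThan_subseteq_atLeastAtMost_iff[of a b s t] by blast+
  have maximal: "T \<subseteq> {a<..<b}" if "connected T" "{a<..<b} \<subseteq> T" "T \<subseteq> {s..t} - A" for T
    using components_maximal[OF C that(1,3)] that(2) \<open>a < b\<close>
    by (metis Int_absorb2 greaterThanLessThan_empty_iff not_le)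
  have "a \<in> A"
  proof (rule ccontr)
    assume "a \<notin> A"
    then have "{a..<b} \<subseteq> {a<..<b}"
      using maximal[of "{a..<b}"] sub ab by force
    then show False using \<open>a < b\<close> by auto
  qed
  moreover have "b \<in> A"
  proof (rule ccontr)
    assume "b \<notin> A"
    then have "{a<..b} \<subseteq> {a<..<b}"
      using maximal[of "{a<..b}"] sub ab by force
    then show False using \<open>a < b\<close> by auto
  qed
  ultimately show ?R using ab sub by blast
next
  assume R: ?R
  show ?C
    unfolding in_components_maximal
  proof (intro conjI allI impI)
    fix D assume D: "D \<noteq> {} \<and> {a<..<b} \<subseteq> D \<and> D \<subseteq> {s..t} - A \<and> connected D"
    have "(a + b) / 2 \<in> {a<..<b}" using R by auto
    then have mid: "(a + b) / 2 \<in> D" using D by blast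
    have "a \<notin> D" "b \<notin> D" using R D by auto
    have "a < x \<and> x < b" if "x \<in> D" for x
    proof (rule ccontr)
      assume "\<not> (a < x \<and> x < b)"
      then have "a \<in> {x..(a + b) / 2} \<or> b \<in> {(a + b) / 2..x}" using R by auto
      then show False
        using connected_contains_Icc[of D x "(a + b) / 2"] connected_contains_Icc[of D "(a + b) / 2" x]
          D mid that \<open>a \<notin> D\<close> \<open>b \<notin> D\<close> by blast
    qed
    then show "D = {a<..<b}" using D by auto
  qed (use R in auto)
qed

lemma scattered_set_if_finite_limit_points:
  assumes "finite {x. x islimpt B}"
  shows "scattered_set B"
  unfolding scattered_set_def
proof (intro allI impI)
  fix C assume C: "C \<subseteq> B" "C \<noteq> {}"
  show "\<exists>x\<in>C. \<not> x islimpt C"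
  proof (cases "C \<subseteq> {x. x islimpt B}")
    case True
    then have "finite C" using assms finite_subset by blast
    then show ?thesis using C(2) islimpt_finite by blast
  next
    case False
    then show ?thesis using C(1) islimpt_subset by blast
  qed
qed

lemma homotopy_cut_set_subset:
  assumes cut: "homotopy_cut_set X s t \<alpha> \<beta> A"
    and inner: "\<forall>a\<in>A \<inter> {s<..<t}. \<forall>b\<in>A \<inter> {s<..<t}. a < b \<longrightarrow> path_homotopic_on X a b \<alpha> \<beta>"
    and "B \<subseteq> A" "closed B" "s \<in> B" "t \<in> B"
    and left: "\<forall>x\<in>A \<inter> {s<..<t}. \<exists>y\<in>B. s < y \<and> y \<le> x"
    and right: "\<forall>x\<in>A \<inter> {s<..<t}. \<exists>y\<in>B. x \<le> y \<and> y < t"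
  shows "homotopy_cut_set X s t \<alpha> \<beta> B"
proof -
  have A: "A \<subseteq> {s..t}" "interior (closure A) = {}" "s \<in> A" "t \<in> A" "\<forall>x\<in>A. \<alpha> x = \<beta> x"
    and gaps_A: "\<And>a b. {a<..<b} \<in> components ({s..t} - A) \<Longrightarrow> path_homotopic_on X a b \<alpha> \<beta>"
    using cut unfolding homotopy_cut_set_def by auto
  have "path_homotopic_on X a b \<alpha> \<beta>" if gap: "{a<..<b} \<in> components ({s..t} - B)" for a b
  proof -
    have ab: "a < b" "s \<le> a" "b \<le> t" "a \<in> B" "b \<in> B" "{a<..<b} \<inter> B = {}"
      using gap open_interval_in_components_iff[of s B t] \<open>s \<in> B\<close> \<open>t \<in> B\<close> by auto
    show ?thesis
    proof (cases "s < a \<and> b < t")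
      case True
      then have "a \<in> A \<inter> {s<..<t}" "b \<in> A \<inter> {s<..<t}" using ab \<open>B \<subseteq> A\<close> by auto
      then show ?thesis using inner \<open>a < b\<close> by blast
    next
      case False
      then have "a = s \<or> b = t" using ab by auto
      have "x \<notin> A" if x: "x \<in> {a<..<b}" for x
      proof
        assume "x \<in> A"
        then have "x \<in> A \<inter> {s<..<t}" using x ab by auto
        from \<open>a = s \<or> b = t\<close> have "\<exists>y\<in>B. y \<in> {a<..<b}"
        proof
          assume "a = s"
          obtain y where "y \<in> B" "s < y" "y \<le> x"
            using left \<open>x \<in> A \<inter> {s<..<t}\<close> by blast
          then show ?thesis using \<open>a = s\<close> x by (intro bexI[of _ y]) auto
        next
          assume "b = t"
          obtain y where "y \<in> B" "x \<le> y" "y < t"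
            using right \<open>x \<in> A \<inter> {s<..<t}\<close> by blast
          then show ?thesis using \<open>b = t\<close> x by (intro bexI[of _ y]) auto
        qed
        then show False using ab by blast
      qed
      then have "{a<..<b} \<in> components ({s..t} - A)"
        using open_interval_in_components_iff[of s A t] A ab \<open>B \<subseteq> A\<close> by blast
      then show ?thesis using gaps_A by blast
    qed
  qed
  moreover have "interior (closure B) \<subseteq> interior (closure A)"
    using \<open>B \<subseteq> A\<close> by (simp add: closure_mono interior_mono)
  ultimately show ?thesis
    unfolding homotopy_cut_set_def using A assms(3-6) by blast
qed

lemma exists_scattered_approximating_subset:
  fixes A :: "real set"
  assumes "closed A" "s \<in> A" "t \<in> A"
  obtains B where "B \<subseteq> A" "closed B" "scattered_set B" "s \<in> B" "t \<in> B"
    "\<forall>x\<in>A \<inter> {s<..<t}. \<exists>y\<in>B. s < y \<and> y \<le> x"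
    "\<forall>x\<in>A \<inter> {s<..<t}. \<exists>y\<in>B. x \<le> y \<and> y < t"
proof (cases "A \<inter> {s<..<t} = {}")
  case True
  have "scattered_set {s, t}"
    by (rule scattered_set_if_finite_limit_points) (simp add: islimpt_finite)
  then show ?thesis
    by (intro that[of "{s, t}"]) (use True assms in auto)
next
  case False
  define S where "S = A \<inter> {s<..<t}"
  have S: "S \<noteq> {}" "bdd_below S" "bdd_above S"
    using False unfolding S_def by (auto intro!: bdd_belowI bdd_aboveI)
  have "closure S \<subseteq> A"
    unfolding S_def using \<open>closed A\<close> closure_minimal by blast
  then have Inf_Sup: "Inf S \<in> A" "Sup S \<in> A"
    using closure_contains_Inf[OF S(1,2)] closure_contains_Sup[OF S(1,3)] by auto
  obtain p where p: "\<forall>n. p n \<in> S" "p \<longlonglongrightarrow> Inf S"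
    using closure_contains_Inf[OF S(1,2)] unfolding closure_sequential by blast
  obtain q where q: "\<forall>n. q n \<in> S" "q \<longlonglongrightarrow> Sup S"
    using closure_contains_Sup[OF S(1,3)] unfolding closure_sequential by blast
  define B where "B = {s, t, Inf S, Sup S} \<union> range p \<union> range q"
  have limit_points: "{x. x islimpt B} \<subseteq> {Inf S, Sup S}"
    using islimpt_finite[of "{s, t, Inf S, Sup S}"]
      sequence_unique_limpt[OF p(2)] sequence_unique_limpt[OF q(2)]
    unfolding B_def islimpt_Un by blast
  have "B \<subseteq> A"
    unfolding B_def using assms(2,3) Inf_Sup p(1) q(1) unfolding S_def by blast
  moreover have "closed B"
    unfolding closed_limpt using limit_points by (auto simp: B_def)
  moreover have "scattered_set B"
    using limit_points finite_subset scattered_set_if_finite_limit_points by blast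
  moreover have "s \<in> B" "t \<in> B"
    by (simp_all add: B_def)
  moreover have "\<forall>x\<in>A \<inter> {s<..<t}. \<exists>y\<in>B. s < y \<and> y \<le> x"
  proof
    fix x assume "x \<in> A \<inter> {s<..<t}"
    then have x: "x \<in> S" "s < x" unfolding S_def by auto
    show "\<exists>y\<in>B. s < y \<and> y \<le> x"
    proof (cases "Inf S < x")
      case True
      then obtain N where "\<forall>n\<ge>N. p n < x"
        using order_tendstoD(2)[OF p(2)] unfolding eventually_sequentially by blast
      moreover have "p N \<in> B" "s < p N" using p(1) by (auto simp: B_def S_def)
      ultimately show ?thesis by (intro bexI[of _ "p N"]) auto
    next
      case False
      then have "Inf S = x" using cInf_lower[OF x(1) S(2)] by simp
      then show ?thesis using x by (intro bexI[of _ x]) (auto simp: B_def)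
    qed
  qed
  moreover have "\<forall>x\<in>A \<inter> {s<..<t}. \<exists>y\<in>B. x \<le> y \<and> y < t"
  proof
    fix x assume "x \<in> A \<inter> {s<..<t}"
    then have x: "x \<in> S" "x < t" unfolding S_def by auto
    show "\<exists>y\<in>B. x \<le> y \<and> y < t"
    proof (cases "x < Sup S")
      case True
      then obtain N where "\<forall>n\<ge>N. x < q n"
        using order_tendstoD(1)[OF q(2)] unfolding eventually_sequentially by blast
      moreover have "q N \<in> B" "q N < t" using q(1) by (auto simp: B_def S_def)
      ultimately show ?thesis by (intro bexI[of _ "q N"]) auto
    next
      case False
      then have "Sup S = x" using cSup_upper[OF x(1) S(3)] by simp
      then show ?thesis using x by (intro bexI[of _ x]) (auto simp: B_def)
    qed
  qed
  ultimately show ?thesis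
    using that by blast
qed

theorem mainTheorem13:
  fixes X :: "'a topology" and \<alpha> \<beta> :: "real \<Rightarrow> 'a" and A :: "real set"
  assumes "well_defined_scattered_products X"
    and "pathin X \<alpha>" and "pathin X \<beta>"
    and "homotopy_cut_set X 0 1 \<alpha> \<beta> A"
    and "\<forall>a\<in>A \<inter> {0<..<1}. \<forall>b\<in>A \<inter> {0<..<1}. a < b \<longrightarrow> path_homotopic_on X a b \<alpha> \<beta>"
  shows "path_homotopic_on X 0 1 \<alpha> \<beta>"
proof -
  have "closed A" "0 \<in> A" "1 \<in> A"
    using assms(4) unfolding homotopy_cut_set_def by auto
  then obtain B where B: "B \<subseteq> A" "closed B" "scattered_set B" "0 \<in> B" "1 \<in> B"
    "\<forall>x\<in>A \<inter> {0<..<1}. \<exists>y\<in>B. 0 < y \<and> y \<le> x"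
    "\<forall>x\<in>A \<inter> {0<..<1}. \<exists>y\<in>B. x \<le> y \<and> y < 1"
    by (rule exists_scattered_approximating_subset)
  have "homotopy_cut_set X 0 1 \<alpha> \<beta> B"
    using homotopy_cut_set_subset[OF assms(4,5)] B by blast
  then show ?thesis
    using assms(1-3) \<open>scattered_set B\<close> unfolding well_defined_scattered_products_def by blast
qed

end
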